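(* Let $X$ be a Banach space, $H$ a Hilbert space, $T\in\mathcal L(X,H)$, $f\in H$, $J$ a seminorm on $X$ such that all Tikhonov functionals below have minimizers, and $(\lambda_k)$ an increasing sequence of positive parameters. Fix $k$ and assume that the MHDM iterate $x_k$ coincides with a chosen minimizer $x_{\lambda_k}$ of $x\mapsto\frac{\lambda_k}{2}\|Tx-f\|^2+J(x)$. Let $x_{\lambda_{k+1}}$ be a minimizer of $x\mapsto\frac{\lambda_{k+1}}{2}\|Tx-f\|^2+J(x)$ and $\xi_{\lambda_{k+1}}=\lambda_{k+1}T^*(f-Tx_{\lambda_{k+1}})\in\partial J(x_{\lambda_{k+1}})$. Then $$x_{\lambda_{k+1}}\in\arg\min_{x\in X}\Big\{\frac{\lambda_{k+1}}{2}\|Tx-f\|^2+J(x-x_k)\Big\}$$ if and only if $$D_J^{\xi_{\lambda_{k+1}}}(x_{\lambda_{k+1}}-x_{\lambda_k},x_{\lambda_{k+1}})=J(x_{\lambda_{k+1}}-x_{\lambda_k})-J(x_{\lambda_{k+1}})+\langle\xi_{\lambda_{k+1}},x_{\lambda_k}\rangle=0.$$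
   Context: Seminorm: $J:X\to[0,\infty]$ with $J(\alpha x)=|\alpha|J(x)$, $J(x+y)\le J(x)+J(y)$. Subgradient: $\partial J(x_0)=\{x^*\in X^*:\langle x^*,x-x_0\rangle\le J(x)-J(x_0)\ \forall x\}$; Bregman distance $D_J^{x^*}(x_1,x_0)=J(x_1)-J(x_0)-\langle x^*,x_1-x_0\rangle$ for $x^*\in\partial J(x_0)$. MHDM: $x_0\in\arg\min_x\frac{\lambda_0}{2}\|Tx-f\|^2+J(x)$, and for $k\ge1$, $x_k\in\arg\min_x\frac{\lambda_k}{2}\|Tx-f\|^2+J(x-x_{k-1})$. *)

theory Defs
  imports "HOL-Analysis.Analysis" "HOL-Library.Extended_Real"
begin

definition ext_seminorm :: "('a::real_vector \<Rightarrow> ereal) \<Rightarrow> bool" where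
  "ext_seminorm J \<longleftrightarrow>
     (\<forall>x. 0 \<le> J x) \<and>
     (\<forall>(\<alpha>::real) x. J (\<alpha> *\<^sub>R x) = ereal \<bar>\<alpha>\<bar> * J x) \<and>
     (\<forall>x y. J (x + y) \<le> J x + J y)"

definition tikh :: "('a::real_normed_vector \<Rightarrow> 'b::real_normed_vector) \<Rightarrow> 'b \<Rightarrow> ('a \<Rightarrow> ereal)
                     \<Rightarrow> real \<Rightarrow> 'a \<Rightarrow> 'a \<Rightarrow> ereal" where
  "tikh T f J lam z x = ereal (lam / 2 * (norm (T x - f))\<^sup>2) + J (x - z)"

definition argmin_set :: "('a \<Rightarrow> ereal) \<Rightarrow> 'a set" where
  "argmin_set F = {x. \<forall>y. F x \<le> F y}"

definition bregman :: "('a::real_vector \<Rightarrow> ereal) \<Rightarrow> ('a \<Rightarrow> real) \<Rightarrow> 'a \<Rightarrow> 'a \<Rightarrow> ereal" where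
  "bregman J \<xi> x1 x0 = J x1 - J x0 - ereal (\<xi> (x1 - x0))"

end

theory Submission
  imports Defs
begin

text \<open>The fidelity term is a quadratic, so z minimizes \<open>\<lambda>/2 \<parallel>T x - f\<parallel>\<^sup>2 + J (x - b)\<close> exactly
  when \<open>\<xi> = \<lambda> T\<^sup>*(f - T z)\<close> is a subgradient of J at \<open>z - b\<close>; for a seminorm this means
  \<open>\<langle>\<xi>, v\<rangle> \<le> J v\<close> for all v and \<open>J (z - b) = \<langle>\<xi>, z - b\<rangle>\<close>. For the Tikhonov minimizer z with
  b = 0 both facts hold, and then minimality for \<open>b = x\<^sub>k\<close> reduces to the equation
  \<open>J (z - x\<^sub>k) = \<langle>\<xi>, z - x\<^sub>k\<rangle>\<close>, i.e. to the vanishing of the Bregman distance.\<close>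

lemma ext_seminorm_zero: "ext_seminorm J \<Longrightarrow> J 0 = 0"
  unfolding ext_seminorm_def by (metis abs_zero ereal_zero_mult scaleR_zero_left zero_ereal_def)

lemma half_sq_norm_linear_expand:
  assumes "linear T"
  shows "mu/2 * (norm (T (z + t *\<^sub>R v) - f))\<^sup>2 =
         mu/2 * (norm (T z - f))\<^sup>2 - t * (mu * inner (f - T z) (T v)) + t\<^sup>2 * (mu/2 * (norm (T v))\<^sup>2)"
proof -
  have "T (z + t *\<^sub>R v) - f = (T z - f) + t *\<^sub>R T v"
    using assms by (simp add: linear_add linear_scale algebra_simps)
  then show ?thesis
    unfolding power2_norm_eq_inner
    by (simp add: inner_add_left inner_add_right inner_diff_left inner_diff_right
        inner_commute algebra_simps power2_eq_square)
qed

lemma half_sq_norm_directional_derivative_le: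
  assumes T: "linear T" and mu: "0 \<le> mu"
    and le: "\<And>t. 0 < t \<Longrightarrow> t \<le> 1 \<Longrightarrow>
               mu/2 * (norm (T z - f))\<^sup>2 \<le> mu/2 * (norm (T (z + t *\<^sub>R v) - f))\<^sup>2 + t * s"
  shows "mu * inner (f - T z) (T v) \<le> s"
proof -
  define \<xi> where "\<xi> = mu * inner (f - T z) (T v)"
  define c where "c = mu/2 * (norm (T v))\<^sup>2"
  have c: "0 \<le> c" using mu by (simp add: c_def)
  have bound: "\<xi> \<le> s + t * c" if t: "0 < t" "t \<le> 1" for t
  proof -
    have "0 \<le> t * (s - \<xi> + t * c)"
      using le[OF t] unfolding half_sq_norm_linear_expand[OF T] \<xi>_def c_def
      by (simp add: algebra_simps power2_eq_square)
    then show ?thesis using t by (simp add: zero_le_mult_iff)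
  qed
  show ?thesis
    unfolding \<xi>_def[symmetric]
  proof (rule field_le_epsilon)
    fix e :: real assume e: "0 < e"
    define t where "t = min 1 (e / (c + 1))"
    have t: "0 < t" "t \<le> 1" using e c by (auto simp: t_def)
    have "t * c \<le> e / (c + 1) * c" using c by (intro mult_right_mono) (auto simp: t_def)
    also have "\<dots> \<le> e" using e c by (simp add: field_simps)
    finally show "\<xi> \<le> s + e" using bound[OF t] by linarith
  qed
qed

lemma tikh_argmin_imp_subgradient:
  fixes T :: "'a::real_normed_vector \<Rightarrow> 'b::real_inner"
  assumes T: "linear T" and J: "ext_seminorm J" and lam: "0 < lam"
    and z: "z \<in> argmin_set (tikh T f J lam b)"
  shows "\<forall>v. ereal (lam * inner (f - T z) (T v)) \<le> J v"
    and "J (z - b) = ereal (lam * inner (f - T z) (T (z - b)))"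
proof -
  define q where "q y = lam/2 * (norm (T y - f))\<^sup>2" for y
  define \<xi> where "\<xi> v = lam * inner (f - T z) (T v)" for v
  have Jnn: "\<And>x. 0 \<le> J x" and Jsc: "\<And>a x. J (a *\<^sub>R x) = ereal \<bar>a\<bar> * J x"
    and Jtri: "\<And>x y. J (x + y) \<le> J x + J y"
    using J unfolding ext_seminorm_def by auto
  have min: "\<And>y. ereal (q z) + J (z - b) \<le> ereal (q y) + J (y - b)"
    using z by (simp add: argmin_set_def tikh_def q_def)
  have "ereal (q z) + J (z - b) \<le> ereal (q b)"
    using min[of b] ext_seminorm_zero[OF J] by simp
  then obtain r where r: "J (z - b) = ereal r"
    using Jnn[of "z - b"] by (cases "J (z - b)") auto
  have descent: "\<xi> v \<le> s"
    if "\<And>t. 0 < t \<Longrightarrow> t \<le> 1 \<Longrightarrow> J (z + t *\<^sub>R v - b) \<le> ereal (r + t * s)" for v s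
    unfolding \<xi>_def
  proof (rule half_sq_norm_directional_derivative_le[OF T])
    fix t :: real assume t: "0 < t" "t \<le> 1"
    have "ereal (q z + r) \<le> ereal (q (z + t *\<^sub>R v)) + J (z + t *\<^sub>R v - b)"
      using min[of "z + t *\<^sub>R v"] r by simp
    also have "\<dots> \<le> ereal (q (z + t *\<^sub>R v)) + ereal (r + t * s)"
      by (rule add_left_mono[OF that[OF t]])
    finally show "lam/2 * (norm (T z - f))\<^sup>2 \<le> lam/2 * (norm (T (z + t *\<^sub>R v) - f))\<^sup>2 + t * s"
      by (simp add: q_def)
  qed (use lam in simp)
  show subgrad: "\<forall>v. ereal (\<xi> v) \<le> J v"
  proof
    fix v
    show "ereal (\<xi> v) \<le> J v"
    proof (cases "J v")
      case (real s)
      have "\<xi> v \<le> s"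
      proof (rule descent)
        fix t :: real assume t: "0 < t" "t \<le> 1"
        have "J (z + t *\<^sub>R v - b) \<le> J (z - b) + J (t *\<^sub>R v)"
          using Jtri[of "z - b" "t *\<^sub>R v"] by (simp add: algebra_simps)
        also have "\<dots> = ereal (r + t * s)" using r real t Jsc[of t v] by simp
        finally show "J (z + t *\<^sub>R v - b) \<le> ereal (r + t * s)" .
      qed
      then show ?thesis using real by simp
    next
      case MInf
      then show ?thesis using Jnn[of v] by simp
    qed simp
  qed
  \<comment> \<open>The reverse inequality comes from shrinking \<open>z - b\<close> towards 0.\<close>
  have "\<xi> (- (z - b)) \<le> - r"
  proof (rule descent)
    fix t :: real assume t: "0 < t" "t \<le> 1"
    have "J (z + t *\<^sub>R - (z - b) - b) = J ((1 - t) *\<^sub>R (z - b))"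
      by (simp add: algebra_simps)
    also have "\<dots> = ereal (r + t * - r)" using Jsc[of "1 - t" "z - b"] r t by (simp add: algebra_simps)
    finally show "J (z + t *\<^sub>R - (z - b) - b) \<le> ereal (r + t * - r)" by simp
  qed
  moreover have "\<xi> (- (z - b)) = - \<xi> (z - b)"
    using T by (simp add: \<xi>_def linear_diff inner_diff_right algebra_simps)
  moreover have "ereal (\<xi> (z - b)) \<le> ereal r" using subgrad r by metis
  ultimately show "J (z - b) = ereal (\<xi> (z - b))" using r by simp
qed

lemma subgradient_imp_tikh_argmin:
  fixes T :: "'a::real_normed_vector \<Rightarrow> 'b::real_inner"
  assumes T: "linear T" and lam: "0 \<le> lam"
    and subgrad: "\<forall>v. ereal (lam * inner (f - T z) (T v)) \<le> J v"
    and eq: "J (z - b) = ereal (lam * inner (f - T z) (T (z - b)))"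
  shows "z \<in> argmin_set (tikh T f J lam b)"
proof -
  define q where "q y = lam/2 * (norm (T y - f))\<^sup>2" for y
  define \<xi> where "\<xi> v = lam * inner (f - T z) (T v)" for v
  have \<xi>_diff: "\<And>u v. \<xi> (u - v) = \<xi> u - \<xi> v"
    using T by (simp add: \<xi>_def linear_diff inner_diff_right algebra_simps)
  have min: "ereal (q z) + J (z - b) \<le> ereal (q y) + J (y - b)" for y
  proof -
    have "q y = q z - \<xi> (y - z) + lam/2 * (norm (T (y - z)))\<^sup>2"
      using half_sq_norm_linear_expand[OF T, of lam z 1 "y - z" f] by (simp add: q_def \<xi>_def)
    moreover have "\<xi> (y - b) = \<xi> (y - z) + \<xi> (z - b)"
      using \<xi>_diff[of y b] \<xi>_diff[of y z] \<xi>_diff[of z b] by simp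
    moreover have "0 \<le> lam/2 * (norm (T (y - z)))\<^sup>2" using lam by simp
    ultimately have "q z + \<xi> (z - b) \<le> q y + \<xi> (y - b)" by linarith
    have "ereal (q z) + J (z - b) = ereal (q z + \<xi> (z - b))"
      using eq by (simp add: \<xi>_def)
    also have "\<dots> \<le> ereal (q y + \<xi> (y - b))"
      using \<open>q z + \<xi> (z - b) \<le> q y + \<xi> (y - b)\<close> by simp
    also have "\<dots> = ereal (q y) + ereal (\<xi> (y - b))" by simp
    also have "\<dots> \<le> ereal (q y) + J (y - b)"
      using subgrad by (intro add_left_mono) (simp add: \<xi>_def)
    finally show ?thesis .
  qed
  show ?thesis
    unfolding argmin_set_def tikh_def mem_Collect_eq by (intro allI min[unfolded q_def])
qed

lemma tikh_argmin_iff_subgradient: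
  fixes T :: "'a::real_normed_vector \<Rightarrow> 'b::real_inner"
  assumes "linear T" and "ext_seminorm J" and "0 < lam"
  shows "z \<in> argmin_set (tikh T f J lam b) \<longleftrightarrow>
         (\<forall>v. ereal (lam * inner (f - T z) (T v)) \<le> J v) \<and>
         J (z - b) = ereal (lam * inner (f - T z) (T (z - b)))"
  using assms tikh_argmin_imp_subgradient subgradient_imp_tikh_argmin
  by (metis less_imp_le)

theorem mainTheorem10:
  fixes T :: "'a::banach \<Rightarrow> 'b::{real_inner, complete_space}"
    and f :: 'b and J :: "'a \<Rightarrow> ereal"
    and lam :: "nat \<Rightarrow> real" and x :: "nat \<Rightarrow> 'a"
    and k :: nat and xl xl' :: 'a
  assumes T: "bounded_linear T"
    and J: "ext_seminorm J"
    and exist: "\<forall>\<mu>>0. \<forall>z. argmin_set (tikh T f J \<mu> z) \<noteq> {}"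
    and lam_pos: "\<forall>j. 0 < lam j"
    and lam_inc: "incseq lam"
    and mhdm0: "x 0 \<in> argmin_set (tikh T f J (lam 0) 0)"
    and mhdmS: "\<forall>j. x (Suc j) \<in> argmin_set (tikh T f J (lam (Suc j)) (x j))"
    and xl: "xl \<in> argmin_set (tikh T f J (lam k) 0)"
    and xk: "x k = xl"
    and xl': "xl' \<in> argmin_set (tikh T f J (lam (Suc k)) 0)"
  shows "xl' \<in> argmin_set (tikh T f J (lam (Suc k)) (x k)) \<longleftrightarrow>
         bregman J (\<lambda>v. lam (Suc k) * inner (f - T xl') (T v)) (xl' - xl) xl' = 0"
proof -
  define \<xi> where "\<xi> = (\<lambda>v. lam (Suc k) * inner (f - T xl') (T v))"
  have lin: "linear T" using T bounded_linear.linear by blast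
  note char = tikh_argmin_iff_subgradient[OF lin J lam_pos[rule_format], where z = xl']
  from xl' have subgrad: "\<forall>v. ereal (\<xi> v) \<le> J v" and J_xl': "J xl' = ereal (\<xi> xl')"
    unfolding char by (simp_all add: \<xi>_def)
  have \<xi>_diff: "\<xi> (xl' - xl) = \<xi> xl' - \<xi> xl" "\<xi> (xl' - xl - xl') = - \<xi> xl"
    using lin by (simp_all add: \<xi>_def linear_diff linear_neg inner_diff_right algebra_simps)
  have "bregman J \<xi> (xl' - xl) xl' = 0 \<longleftrightarrow> J (xl' - xl) = ereal (\<xi> (xl' - xl))"
    unfolding bregman_def J_xl' \<xi>_diff by (cases "J (xl' - xl)") auto
  moreover have "xl' \<in> argmin_set (tikh T f J (lam (Suc k)) xl) \<longleftrightarrow>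
                 J (xl' - xl) = ereal (\<xi> (xl' - xl))"
    unfolding char using subgrad by (simp add: \<xi>_def)
  ultimately show ?thesis unfolding xk \<xi>_def by simp
qed

end
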